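(* Let $q$ be a prime power, $n$ a positive integer with $\gcd(q,n)=1$, $P\subseteq\mathbb{Z}_n$ a $\mu_q$-invariant subset, $s\in\mathbb{Z}_n^*$ and $t\in\mathbb{Z}_n$ with $qt\equiv t\pmod n$. Then $\varphi_{s,t}(C_P)=C_{\rho_{s,t}(P)}$.
   Context: $R_n=\mathbb{F}_q[X]/\langle X^n-1\rangle$; cyclic codes are ideals of $R_n$. Fix a primitive $n$-th root of unity $\theta$ in an extension of $\mathbb{F}_q$. $\mu_q:\mathbb{Z}_n\to\mathbb{Z}_n$, $i\mapsto qi\bmod n$; $P$ is $\mu_q$-invariant if $\mu_q(P)=P$. For such $P$, $f_P(X)=\prod_{i\in P}(X-\theta^i)\in\mathbb{F}_q[X]$ and $C_P$ is the ideal of $R_n$ generated by $(X^n-1)/f_P(X)$ (the cyclic code with check polynomial $f_P$). $\rho_{s,t}:\mathbb{Z}_n\to\mathbb{Z}_n$, $i\mapsto s(i+t)\bmod n$ (it maps $\mu_q$-invariant sets to $\mu_q$-invariant sets). $\varphi_{s,t}:R_n\to R_n$, $a(X)\mapsto a(\theta^{-t}X^{s^{-1}})\bmod(X^n-1)$, where $s^{-1}$ is a positive integer with $ss^{-1}\equiv1\pmod n$ (note $\theta^{-t}\in\mathbb{F}_q$). *)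

theory Defs
  imports "HOL-Computational_Algebra.Polynomial" "HOL-Number_Theory.Cong"
begin

text \<open>Elements of R_n = F_q[X]/(X^n - 1) are represented by their canonical
 representatives: polynomials over F_q of degree < n (reduction = mod (X^n - 1)).\<close>

definition xn1 :: "nat \<Rightarrow> 'a::field poly" where
  "xn1 n = monom 1 n - 1"

definition mu_invariant :: "nat \<Rightarrow> nat \<Rightarrow> nat set \<Rightarrow> bool" where
  "mu_invariant q n P \<longleftrightarrow> P \<subseteq> {..<n} \<and> (\<lambda>i. q * i mod n) ` P = P"

definition rho :: "nat \<Rightarrow> nat \<Rightarrow> nat \<Rightarrow> nat \<Rightarrow> nat" where
  "rho n s t i = s * (i + t) mod n"

definition fP_ext :: "'b::field \<Rightarrow> nat set \<Rightarrow> 'b poly" where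
  "fP_ext \<theta> P = (\<Prod>i\<in>P. [:- (\<theta> ^ i), 1:])"

definition fP :: "('a::field \<Rightarrow> 'b::field) \<Rightarrow> 'b \<Rightarrow> nat set \<Rightarrow> 'a poly" where
  "fP emb \<theta> P = (THE p. map_poly emb p = fP_ext \<theta> P)"

definition cyc_code :: "('a::field \<Rightarrow> 'b::field) \<Rightarrow> 'b \<Rightarrow> nat \<Rightarrow> nat set \<Rightarrow> 'a poly set" where
  "cyc_code emb \<theta> n P = {((xn1 n div fP emb \<theta> P) * b) mod xn1 n | b. True}"

text \<open>phi_{s,t}: a(X) \<mapsto> a(theta^(-t) X^(s')) mod (X^n - 1), where s' is the chosen
 positive inverse of s mod n and theta^(-t) is viewed as an element of F_q.\<close>
definition phi :: "('a::field \<Rightarrow> 'b::field) \<Rightarrow> 'b \<Rightarrow> nat \<Rightarrow> nat \<Rightarrow> nat \<Rightarrow> 'a poly \<Rightarrow> 'a poly" where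
  "phi emb \<theta> n s' t a =
     pcompose a (monom (THE c. emb c = inverse (\<theta> ^ t)) s') mod xn1 n"

end

theory Submission
  imports Defs "HOL-Library.Cardinality" "Subresultants.More_Homomorphisms"
begin

text \<open>Both codes are described by their zeros: \<open>C\<^sub>P\<close> consists of the polynomials of
  degree \<open>< n\<close> whose image over the extension field vanishes at \<open>\<theta>\<^sup>j\<close> for every
  \<open>j \<notin> P\<close>. (That \<open>f\<^sub>P\<close> has coefficients in \<open>\<bbbF>\<^sub>q\<close> at all is because
  \<open>\<mu>\<^sub>q\<close>-invariance of \<open>P\<close> makes \<open>f\<^sub>P\<close> fixed by the Frobenius \<open>x \<mapsto> x\<^sup>q\<close>,
  whose fixed points are exactly \<open>\<bbbF>\<^sub>q\<close>.) Since \<open>qt \<equiv> t\<close>, also \<open>\<theta>\<^sup>t \<in> \<bbbF>\<^sub>q\<close>,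
  and evaluating \<open>\<phi>\<^sub>s\<^sub>,\<^sub>t(a)\<close> at \<open>\<theta>\<^bsup>\<rho>(i)\<^esup>\<close> gives the value of \<open>a\<close> at
  \<open>\<theta>\<^sup>i\<close>; the substitution \<open>X \<mapsto> \<theta>\<^bsup>ts\<^esup>X\<^sup>s\<close> undoes this. As \<open>\<rho>\<close> permutes
  \<open>\<int>\<^sub>n\<close>, \<open>\<phi>\<^sub>s\<^sub>,\<^sub>t\<close> carries the zero pattern of \<open>C\<^sub>P\<close> onto that of
  \<open>C\<^bsub>\<rho>(P)\<^esub>\<close>.\<close>

section \<open>Finite fields\<close>

lemma power_card_eq_self:
  fixes x :: "'a::{field,finite}"
  shows "x ^ CARD('a) = x"
proof (cases "x = 0")
  case False
  let ?U = "UNIV - {0} :: 'a set"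
  have "bij_betw ((*) x) ?U ?U"
    by (rule bij_betwI[where g = "\<lambda>y. y / x"]) (use False in auto)
  then have "(\<Prod>y\<in>?U. x * y) = \<Prod>?U"
    by (rule prod.reindex_bij_betw)
  then have "x ^ card ?U * \<Prod>?U = 1 * \<Prod>?U"
    by (simp add: prod.distrib)
  then have "x ^ card ?U = 1"
    by (subst (asm) mult_cancel_right) auto
  moreover have "card ?U = CARD('a) - 1"
    by (rule card_Diff_singleton) simp
  moreover have "CARD('a) = Suc (CARD('a) - 1)"
    using finite_UNIV_card_ge_0[where 'a = 'a] by simp
  ultimately show ?thesis
    by (metis power_Suc2 mult_1)
qed simp

lemma card_field_ge_2: "CARD('a::{field,finite}) \<ge> 2"
  using card_mono[of UNIV "{0, 1 :: 'a}"] by simp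

lemma linear_power_card:
  "([:1, 1:] :: 'a::{field,finite} poly) ^ CARD('a) = monom 1 CARD('a) + 1"
proof (rule poly_eqI_degree_lead_coeff[where n = "CARD('a)" and A = UNIV])
  show "coeff ([:1, 1:] ^ CARD('a)) CARD('a) = coeff (monom 1 CARD('a) + 1 :: 'a poly) CARD('a)"
  proof -
    have "degree ([:1, 1 :: 'a:] ^ CARD('a)) = CARD('a)"
      by (rule degree_linear_power)
    then show ?thesis
      using card_field_ge_2[where 'a = 'a] lead_coeff_power[of "[:1, 1 :: 'a:]" "CARD('a)"]
      by simp
  qed
  show "degree (monom 1 CARD('a) + 1 :: 'a poly) \<le> CARD('a)"
    by (simp add: degree_add_le degree_monom_le)
  show "poly ([:1, 1:] ^ CARD('a)) x = poly (monom 1 CARD('a) + 1) x" for x :: 'a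
    using power_card_eq_self[of "x + 1"] power_card_eq_self[of x] by (simp add: poly_monom add.commute)
  show "degree ([:1, 1 :: 'a:] ^ CARD('a)) \<le> CARD('a)"
    using degree_power_le[of "[:1, 1 :: 'a:]" "CARD('a)"] by simp
qed simp

lemma prod_linear_factors_dvd:
  fixes p :: "'a::idom poly"
  assumes "finite A" "\<And>x. x \<in> A \<Longrightarrow> poly p x = 0"
  shows "(\<Prod>x\<in>A. [:- x, 1:]) dvd p"
  using assms
proof (induction A arbitrary: p rule: finite_induct)
  case (insert x A)
  have "(\<Prod>y\<in>A. [:- y, 1:]) dvd p"
    using insert.IH insert.prems by simp
  then obtain k where k: "p = (\<Prod>y\<in>A. [:- y, 1:]) * k" ..
  have "poly (\<Prod>y\<in>A. [:- y, 1:]) x \<noteq> 0"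
    using insert.hyps by (auto simp: poly_prod)
  moreover have "poly p x = 0"
    using insert.prems by simp
  ultimately have "poly k x = 0"
    using k by simp
  then have "[:- x, 1:] dvd k"
    by (simp add: poly_eq_0_iff_dvd)
  then have "(\<Prod>y\<in>A. [:- y, 1:]) * [:- x, 1:] dvd p"
    unfolding k by (rule mult_dvd_mono[OF dvd_refl])
  with insert.hyps show ?case
    by (simp add: mult.commute)
qed simp

lemma degree_xn1: "n > 0 \<Longrightarrow> degree (xn1 n :: 'a::field poly) = n"
  unfolding xn1_def diff_conv_add_uminus by (subst degree_add_eq_left) (auto simp: degree_monom_eq)

lemma xn1_nonzero: "n > 0 \<Longrightarrow> (xn1 n :: 'a::field poly) \<noteq> 0"
  by (metis degree_0 degree_xn1 less_irrefl)

lemma degree_mod_xn1_less: "n > 0 \<Longrightarrow> degree (a mod xn1 n :: 'a::field poly) < n"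
  by (metis degree_0 degree_mod_less degree_xn1 less_irrefl)

locale finite_field_hom = field_hom hom for hom :: "'a::{field,finite} \<Rightarrow> 'b::field"
begin

sublocale map_poly_hom: map_poly_inj_idom_hom hom ..

lemma power_card_add: "(x + y :: 'b) ^ CARD('a) = x ^ CARD('a) + y ^ CARD('a)"
proof -
  have "map_poly hom ([:1, 1:] ^ CARD('a)) = map_poly hom (monom 1 CARD('a) + 1)"
    by (simp only: linear_power_card)
  then have "[:1, 1:] ^ CARD('a) = (monom 1 CARD('a) + 1 :: 'b poly)"
    by (simp add: hom_distribs)
  then have add_one: "(z + 1) ^ CARD('a) = z ^ CARD('a) + 1" for z :: 'b
  proof -
    have "poly ([:1, 1:] ^ CARD('a)) z = poly (monom 1 CARD('a) + 1 :: 'b poly) z"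
      using \<open>[:1, 1:] ^ CARD('a) = (monom 1 CARD('a) + 1 :: 'b poly)\<close> by (rule arg_cong)
    then show ?thesis
      by (simp add: poly_monom add.commute)
  qed
  show ?thesis
  proof (cases "y = 0")
    case False
    then have "(x + y) ^ CARD('a) = (y * (x / y + 1)) ^ CARD('a)"
      by (simp add: distrib_left)
    also have "\<dots> = y ^ CARD('a) * ((x / y) ^ CARD('a) + 1)"
      by (simp add: power_mult_distrib add_one)
    also have "\<dots> = x ^ CARD('a) + y ^ CARD('a)"
      using False by (simp add: power_divide distrib_left)
    finally show ?thesis .
  qed (simp add: power_0_left)
qed

lemma field_hom_power_card: "field_hom (\<lambda>x::'b. x ^ CARD('a))"
  by unfold_locales (simp_all add: power_card_add power_mult_distrib power_0_left)

lemma in_range_if_power_card_eq: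
  assumes z: "z ^ CARD('a) = z"
  shows "z \<in> range hom"
proof (rule ccontr)
  assume z_notin: "z \<notin> range hom"
  define Q :: "'b poly" where "Q = monom 1 CARD('a) - [:0, 1:]"
  have "degree Q = CARD('a)"
    using card_field_ge_2[where 'a = 'a] unfolding Q_def diff_conv_add_uminus
    by (subst degree_add_eq_left) (auto simp: degree_monom_eq)
  then have "Q \<noteq> 0"
    using card_field_ge_2[where 'a = 'a] by auto
  have "insert z (range hom) \<subseteq> {x. poly Q x = 0}"
    using z by (auto simp: Q_def poly_monom power_card_eq_self simp flip: hom_power)
  then have "card (insert z (range hom)) \<le> card {x. poly Q x = 0}"
    by (rule card_mono[OF poly_roots_finite[OF \<open>Q \<noteq> 0\<close>]])
  also have "\<dots> \<le> CARD('a)"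
    using card_poly_roots_bound[OF \<open>Q \<noteq> 0\<close>] \<open>degree Q = CARD('a)\<close> by simp
  finally show False
    using z_notin by (simp add: card_image inj_f)
qed

lemma in_range_map_poly_if_coeffs_fixed:
  assumes "\<And>k. coeff F k ^ CARD('a) = coeff F k"
  shows "F \<in> range (map_poly hom)"
proof -
  have inv_zero: "inv_into UNIV hom 0 = 0"
    by (metis hom_zero inv_f_f)
  have "F = map_poly hom (map_poly (inv_into UNIV hom) F)"
  proof (rule poly_eqI)
    fix k
    have "coeff F k \<in> range hom"
      by (rule in_range_if_power_card_eq[OF assms])
    then show "coeff F k = coeff (map_poly hom (map_poly (inv_into UNIV hom) F)) k"
      by (simp add: coeff_map_poly inv_zero f_inv_into_f)
  qed
  then show ?thesis
    by blast
qed

end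

section \<open>Primitive roots of unity\<close>

locale primitive_root =
  fixes \<theta> :: "'b::field" and n :: nat
  assumes n_pos: "n > 0"
    and root: "\<theta> ^ n = 1"
    and primitive: "\<And>k. 0 < k \<Longrightarrow> k < n \<Longrightarrow> \<theta> ^ k \<noteq> 1"
begin

lemma root_power_mod: "\<theta> ^ (k mod n) = \<theta> ^ k"
proof -
  have "\<theta> ^ k = \<theta> ^ (n * (k div n) + k mod n)"
    by (simp only: mult_div_mod_eq)
  also have "\<dots> = \<theta> ^ (k mod n)"
    by (simp only: power_add power_mult root power_one mult_1)
  finally show ?thesis
    by (rule sym)
qed

lemma root_power_cong: "[i = j] (mod n) \<Longrightarrow> \<theta> ^ i = \<theta> ^ j"
  by (metis root_power_mod cong_def)

lemma root_nonzero: "\<theta> \<noteq> 0"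
  using root n_pos by (auto simp: power_0_left)

lemma inj_on_root_powers: "inj_on (\<lambda>j. \<theta> ^ j) {..<n}"
proof (rule linorder_inj_onI')
  fix i j assume "i \<in> {..<n}" "j \<in> {..<n}" "i < j"
  then have "\<theta> ^ (j - i) \<noteq> 1"
    by (intro primitive) auto
  moreover have "\<theta> ^ j = \<theta> ^ i * \<theta> ^ (j - i)"
    using \<open>i < j\<close> by (simp flip: power_add)
  ultimately show "\<theta> ^ i \<noteq> \<theta> ^ j"
    using root_nonzero by auto
qed

lemma card_root_powers: "card ((\<lambda>j. \<theta> ^ j) ` {..<n}) = n"
  by (simp add: card_image inj_on_root_powers)

lemma poly_xn1_root_power: "poly (xn1 n) (\<theta> ^ j) = 0"
proof -
  have "(\<theta> ^ j) ^ n = (\<theta> ^ n) ^ j"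
    by (simp flip: power_mult add: mult.commute)
  then show ?thesis
    by (simp add: xn1_def poly_monom root)
qed

lemma xn1_eq_prod_root_powers: "xn1 n = (\<Prod>j<n. [:- (\<theta> ^ j), 1:])"
proof (rule poly_eqI_degree_lead_coeff[where n = n and A = "(\<lambda>j. \<theta> ^ j) ` {..<n}"])
  have "degree (\<Prod>j<n. [:- (\<theta> ^ j), 1:]) = n"
    by (simp add: degree_prod_eq_sum_degree)
  moreover have "lead_coeff (\<Prod>j<n. [:- (\<theta> ^ j), 1:]) = 1"
    by (simp add: lead_coeff_prod)
  ultimately show "coeff (xn1 n) n = coeff (\<Prod>j<n. [:- (\<theta> ^ j), 1:]) n"
    and "degree (\<Prod>j<n. [:- (\<theta> ^ j), 1:]) \<le> n"
    using n_pos by (simp_all add: xn1_def)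
  show "degree (xn1 n :: 'b poly) \<le> n"
    by (simp add: degree_xn1[OF n_pos])
  show "poly (xn1 n) x = poly (\<Prod>j<n. [:- (\<theta> ^ j), 1:]) x" if "x \<in> (\<lambda>j. \<theta> ^ j) ` {..<n}" for x
    using that by (auto simp: poly_xn1_root_power poly_prod)
qed (simp add: card_root_powers)

lemma poly_eqI_root_powers:
  assumes "degree p < n" "degree r < n" "\<And>j. j < n \<Longrightarrow> poly p (\<theta> ^ j) = poly r (\<theta> ^ j)"
  shows "p = r"
  by (rule poly_eqI_degree[where A = "(\<lambda>j. \<theta> ^ j) ` {..<n}"]) (use assms in \<open>auto simp: card_root_powers\<close>)

end

section \<open>The affine index maps\<close>

lemma bij_betw_rho:
  assumes "coprime s n"
  shows "bij_betw (rho n s t) {..<n} {..<n}"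
proof -
  have "inj_on (rho n s t) {..<n}"
  proof (rule inj_onI)
    fix i j assume i: "i \<in> {..<n}" and j: "j \<in> {..<n}" and "rho n s t i = rho n s t j"
    then have "[s * (i + t) = s * (j + t)] (mod n)"
      by (simp add: rho_def cong_def)
    then have "[i = j] (mod n)"
      using assms by (simp add: cong_mult_lcancel_nat cong_add_rcancel_nat)
    with i j show "i = j"
      by (simp add: cong_less_modulus_unique_nat)
  qed
  moreover have "rho n s t ` {..<n} \<subseteq> {..<n}"
    by (auto simp: rho_def)
  ultimately show ?thesis
    by (simp add: bij_betw_def endo_inj_surj)
qed

lemma mult_rho_mod:
  assumes "[q * t = t] (mod n)"
  shows "q * rho n s t i mod n = rho n s t (q * i mod n)"
proof -
  have "[q * rho n s t i = q * (s * (i + t))] (mod n)"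
    by (simp add: rho_def cong_def mod_mult_right_eq)
  also have "q * (s * (i + t)) = s * (q * i + q * t)"
    by (simp add: algebra_simps)
  also have "[s * (q * i + q * t) = s * (q * i + t)] (mod n)"
    using assms by (intro cong_mult cong_add) auto
  also have "[s * (q * i + t) = rho n s t (q * i mod n)] (mod n)"
    unfolding rho_def cong_def by (metis mod_add_left_eq mod_mult_right_eq mod_mod_trivial)
  finally show ?thesis
    by (simp add: cong_def rho_def)
qed

lemma mu_invariant_rho_image:
  assumes "mu_invariant q n P" "[q * t = t] (mod n)"
  shows "mu_invariant q n (rho n s t ` P)"
proof -
  have "(\<lambda>i. q * i mod n) ` rho n s t ` P = rho n s t ` (\<lambda>i. q * i mod n) ` P"
    using mult_rho_mod[OF assms(2)] by (simp add: image_image)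
  moreover have "rho n s t ` P \<subseteq> {..<n}"
    using assms(1) by (auto simp: mu_invariant_def rho_def)
  ultimately show ?thesis
    using assms(1) by (simp add: mu_invariant_def)
qed

lemma rho_mult_inverse_cong:
  assumes "[s * s' = 1] (mod n)"
  shows "[rho n s t i * s' = i + t] (mod n)"
proof -
  have "[rho n s t i * s' = (s * s') * (i + t)] (mod n)"
    unfolding rho_def cong_def by (metis mod_mult_left_eq mult.commute mult.assoc)
  also have "[(s * s') * (i + t) = 1 * (i + t)] (mod n)"
    using assms by (rule cong_mult) simp
  finally show ?thesis
    by simp
qed

section \<open>Cyclic codes and their zeros\<close>

locale cyclic_code = finite_field_hom emb + primitive_root \<theta> n
  for emb :: "'a::{field,finite} \<Rightarrow> 'b::field" and \<theta> :: 'b and n :: nat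
begin

lemma map_poly_xn1: "map_poly emb (xn1 n) = xn1 n"
  by (simp add: xn1_def hom_distribs)

lemma poly_mod_xn1: "poly (map_poly emb (a mod xn1 n)) (\<theta> ^ j) = poly (map_poly emb a) (\<theta> ^ j)"
  by (simp add: hom_distribs map_poly_xn1 poly_mod poly_xn1_root_power)

lemma poly_pcompose_monom_mod_xn1:
  "poly (map_poly emb (pcompose a (monom c k) mod xn1 n)) (\<theta> ^ j)
     = poly (map_poly emb a) (emb c * \<theta> ^ (j * k))"
  unfolding poly_mod_xn1 by (simp add: hom_distribs poly_pcompose poly_monom power_mult)

lemma frobenius_fP_ext:
  assumes "mu_invariant CARD('a) n P"
  shows "map_poly (\<lambda>x. x ^ CARD('a)) (fP_ext \<theta> P) = fP_ext \<theta> P"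
proof -
  interpret frobenius: field_hom "\<lambda>x::'b. x ^ CARD('a)"
    by (rule field_hom_power_card)
  interpret map_poly_frobenius: map_poly_idom_hom "\<lambda>x::'b. x ^ CARD('a)" ..
  let ?\<mu> = "\<lambda>i. CARD('a) * i mod n"
  have P: "P \<subseteq> {..<n}" "?\<mu> ` P = P"
    using assms by (auto simp: mu_invariant_def)
  then have "finite P"
    using finite_subset by blast
  with P have inj: "inj_on ?\<mu> P"
    by (intro eq_card_imp_inj_on) auto
  have "(\<theta> ^ i) ^ CARD('a) = \<theta> ^ ?\<mu> i" for i
    by (simp add: root_power_mod mult.commute flip: power_mult)
  then have "map_poly (\<lambda>x. x ^ CARD('a)) (fP_ext \<theta> P) = (\<Prod>i\<in>P. [:- (\<theta> ^ ?\<mu> i), 1:])"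
    by (simp add: fP_ext_def hom_distribs)
  also have "\<dots> = (\<Prod>j\<in>?\<mu> ` P. [:- (\<theta> ^ j), 1:])"
    by (simp add: prod.reindex inj)
  finally show ?thesis
    unfolding P(2) fP_ext_def .
qed

lemma map_poly_fP:
  assumes "mu_invariant CARD('a) n P"
  shows "map_poly emb (fP emb \<theta> P) = fP_ext \<theta> P"
proof -
  have "fP_ext \<theta> P \<in> range (map_poly emb)"
  proof (rule in_range_map_poly_if_coeffs_fixed)
    fix k
    show "coeff (fP_ext \<theta> P) k ^ CARD('a) = coeff (fP_ext \<theta> P) k"
      using arg_cong[OF frobenius_fP_ext[OF assms], of "\<lambda>p. coeff p k"]
      by (simp add: coeff_map_poly power_0_left)
  qed
  then obtain p where p: "map_poly emb p = fP_ext \<theta> P"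
    by (metis rangeE)
  then have "fP emb \<theta> P = p"
    unfolding fP_def by (rule the_equality) (simp add: p flip: map_poly_hom.eq_iff)
  with p show ?thesis
    by simp
qed

lemma xn1_eq_fP_ext_mult:
  assumes "P \<subseteq> {..<n}"
  shows "xn1 n = fP_ext \<theta> P * (\<Prod>j\<in>{..<n} - P. [:- (\<theta> ^ j), 1:])"
  using prod.subset_diff[OF assms finite_lessThan] by (simp add: xn1_eq_prod_root_powers fP_ext_def mult.commute)

lemma map_poly_generator:
  assumes "mu_invariant CARD('a) n P"
  shows "map_poly emb (xn1 n div fP emb \<theta> P) = (\<Prod>j\<in>{..<n} - P. [:- (\<theta> ^ j), 1:])"
proof -
  have P: "P \<subseteq> {..<n}"
    using assms by (simp add: mu_invariant_def)
  have "fP_ext \<theta> P \<noteq> 0"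
    using xn1_eq_fP_ext_mult[OF P] xn1_nonzero[OF n_pos, where 'a = 'b] by auto
  then show ?thesis
    by (simp add: hom_distribs map_poly_xn1 map_poly_fP[OF assms] xn1_eq_fP_ext_mult[OF P])
qed

lemma mem_cyc_code_iff:
  assumes P: "mu_invariant CARD('a) n P"
  shows "a \<in> cyc_code emb \<theta> n P \<longleftrightarrow>
    degree a < n \<and> (\<forall>j<n. j \<notin> P \<longrightarrow> poly (map_poly emb a) (\<theta> ^ j) = 0)"
proof
  let ?g = "xn1 n div fP emb \<theta> P"
  assume "a \<in> cyc_code emb \<theta> n P"
  then obtain b where a: "a = (?g * b) mod xn1 n"
    by (auto simp: cyc_code_def)
  show "degree a < n \<and> (\<forall>j<n. j \<notin> P \<longrightarrow> poly (map_poly emb a) (\<theta> ^ j) = 0)"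
  proof (intro conjI allI impI)
    show "degree a < n"
      unfolding a using n_pos by (rule degree_mod_xn1_less)
    fix j assume "j < n" "j \<notin> P"
    then show "poly (map_poly emb a) (\<theta> ^ j) = 0"
      unfolding a poly_mod_xn1 map_poly_hom.hom_mult map_poly_generator[OF P]
      by (auto simp: poly_prod prod_zero_iff)
  qed
next
  let ?g = "xn1 n div fP emb \<theta> P"
  assume a: "degree a < n \<and> (\<forall>j<n. j \<notin> P \<longrightarrow> poly (map_poly emb a) (\<theta> ^ j) = 0)"
  have "(\<Prod>x\<in>(\<lambda>j. \<theta> ^ j) ` ({..<n} - P). [:- x, 1:]) dvd map_poly emb a"
    by (rule prod_linear_factors_dvd) (use a in auto)
  then have "map_poly emb ?g dvd map_poly emb a"
    by (simp add: map_poly_generator[OF P] prod.reindex inj_on_subset[OF inj_on_root_powers])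
  then obtain b where "a = ?g * b"
    by (blast dest: dvd_map_poly_hom_imp_dvd)
  moreover have "a mod xn1 n = a"
    using a by (intro mod_poly_less) (simp add: degree_xn1[OF n_pos])
  ultimately have "a = (?g * b) mod xn1 n"
    by simp
  then show "a \<in> cyc_code emb \<theta> n P"
    unfolding cyc_code_def by blast
qed

lemma mem_cyc_code_transfer:
  assumes P: "mu_invariant CARD('a) n P" and \<pi>P: "mu_invariant CARD('a) n (\<pi> ` P)"
    and \<pi>: "bij_betw \<pi> {..<n} {..<n}"
    and "degree c < n" "degree d < n"
    and poly_cd: "\<And>i. i < n \<Longrightarrow> poly (map_poly emb c) (\<theta> ^ i) = poly (map_poly emb d) (\<theta> ^ \<pi> i)"
  shows "c \<in> cyc_code emb \<theta> n P \<longleftrightarrow> d \<in> cyc_code emb \<theta> n (\<pi> ` P)"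
proof -
  have P_sub: "P \<subseteq> {..<n}"
    using P by (simp add: mu_invariant_def)
  have "(\<forall>i<n. i \<notin> P \<longrightarrow> poly (map_poly emb c) (\<theta> ^ i) = 0) \<longleftrightarrow>
        (\<forall>i<n. \<pi> i \<notin> \<pi> ` P \<longrightarrow> poly (map_poly emb d) (\<theta> ^ \<pi> i) = 0)"
  proof -
    have "\<pi> i \<notin> \<pi> ` P \<longleftrightarrow> i \<notin> P" if "i < n" for i
      using that P_sub \<pi> by (auto simp: bij_betw_def inj_on_eq_iff)
    then show ?thesis
      by (simp add: poly_cd)
  qed
  also have "\<dots> \<longleftrightarrow> (\<forall>j\<in>\<pi> ` {..<n}. j \<notin> \<pi> ` P \<longrightarrow> poly (map_poly emb d) (\<theta> ^ j) = 0)"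
    by blast
  also have "\<dots> \<longleftrightarrow> (\<forall>j<n. j \<notin> \<pi> ` P \<longrightarrow> poly (map_poly emb d) (\<theta> ^ j) = 0)"
    using \<pi> by (simp add: bij_betw_def Ball_def)
  finally show ?thesis
    using assms(4,5) by (simp add: mem_cyc_code_iff[OF P] mem_cyc_code_iff[OF \<pi>P])
qed

lemma image_cyc_code:
  assumes P: "mu_invariant CARD('a) n P" and \<pi>P: "mu_invariant CARD('a) n (\<pi> ` P)"
    and \<pi>: "bij_betw \<pi> {..<n} {..<n}"
    and degree_\<Phi>: "\<And>a. degree (\<Phi> a) < n" and degree_\<Psi>: "\<And>b. degree (\<Psi> b) < n"
    and poly_\<Phi>: "\<And>a i. i < n \<Longrightarrow> poly (map_poly emb (\<Phi> a)) (\<theta> ^ \<pi> i) = poly (map_poly emb a) (\<theta> ^ i)"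
    and poly_\<Psi>: "\<And>b i. i < n \<Longrightarrow> poly (map_poly emb (\<Psi> b)) (\<theta> ^ i) = poly (map_poly emb b) (\<theta> ^ \<pi> i)"
  shows "\<Phi> ` cyc_code emb \<theta> n P = cyc_code emb \<theta> n (\<pi> ` P)"
proof
  show "\<Phi> ` cyc_code emb \<theta> n P \<subseteq> cyc_code emb \<theta> n (\<pi> ` P)"
  proof (rule image_subsetI)
    fix a assume a: "a \<in> cyc_code emb \<theta> n P"
    then have "degree a < n"
      by (simp add: mem_cyc_code_iff[OF P])
    with a show "\<Phi> a \<in> cyc_code emb \<theta> n (\<pi> ` P)"
      using mem_cyc_code_transfer[OF P \<pi>P \<pi> _ degree_\<Phi>] poly_\<Phi> by simp
  qed
  show "cyc_code emb \<theta> n (\<pi> ` P) \<subseteq> \<Phi> ` cyc_code emb \<theta> n P"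
  proof
    fix b assume b: "b \<in> cyc_code emb \<theta> n (\<pi> ` P)"
    then have "degree b < n"
      by (simp add: mem_cyc_code_iff[OF \<pi>P])
    with b have "\<Psi> b \<in> cyc_code emb \<theta> n P"
      using mem_cyc_code_transfer[OF P \<pi>P \<pi> degree_\<Psi>] poly_\<Psi> by simp
    moreover have "map_poly emb (\<Phi> (\<Psi> b)) = map_poly emb b"
    proof (rule poly_eqI_root_powers)
      fix j assume "j < n"
      then obtain i where "i < n" "j = \<pi> i"
        using \<pi> by (auto simp: bij_betw_def)
      then show "poly (map_poly emb (\<Phi> (\<Psi> b))) (\<theta> ^ j) = poly (map_poly emb b) (\<theta> ^ j)"
        by (simp add: poly_\<Phi> poly_\<Psi>)
    qed (simp_all add: degree_\<Phi> \<open>degree b < n\<close>)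
    ultimately show "b \<in> \<Phi> ` cyc_code emb \<theta> n P"
      by (metis image_eqI map_poly_hom.eq_iff)
  qed
qed

lemma root_power_in_range:
  assumes "[CARD('a) * t = t] (mod n)"
  shows "\<theta> ^ t \<in> range emb"
proof (rule in_range_if_power_card_eq)
  show "(\<theta> ^ t) ^ CARD('a) = \<theta> ^ t"
    using root_power_cong[OF assms] by (simp flip: power_mult add: mult.commute)
qed

lemma phi_eq_pcompose:
  assumes "emb c = \<theta> ^ t"
  shows "phi emb \<theta> n s' t a = pcompose a (monom (inverse c) s') mod xn1 n"
proof -
  have "(THE c'. emb c' = inverse (\<theta> ^ t)) = inverse c"
    using assms by (intro the_equality) (simp_all add: hom_distribs flip: eq_iff)
  then show ?thesis
    by (simp add: phi_def)
qed

lemma poly_phi_rho: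
  assumes c: "emb c = \<theta> ^ t" and s': "[s * s' = 1] (mod n)"
  shows "poly (map_poly emb (phi emb \<theta> n s' t a)) (\<theta> ^ rho n s t i) = poly (map_poly emb a) (\<theta> ^ i)"
proof -
  have "\<theta> ^ (rho n s t i * s') = \<theta> ^ t * \<theta> ^ i"
    using root_power_cong[OF rho_mult_inverse_cong[OF s']] by (simp add: power_add)
  then have "emb (inverse c) * \<theta> ^ (rho n s t i * s') = \<theta> ^ i"
    using c root_nonzero by (simp add: hom_distribs)
  then show ?thesis
    by (simp add: phi_eq_pcompose[OF c] poly_pcompose_monom_mod_xn1)
qed

lemma poly_pcompose_rho:
  assumes c: "emb c = \<theta> ^ t"
  shows "poly (map_poly emb (pcompose b (monom (c ^ s) s) mod xn1 n)) (\<theta> ^ i)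
    = poly (map_poly emb b) (\<theta> ^ rho n s t i)"
proof -
  have "emb (c ^ s) * \<theta> ^ (i * s) = \<theta> ^ rho n s t i"
    using c by (simp add: hom_distribs rho_def root_power_mod algebra_simps flip: power_mult power_add)
  then show ?thesis
    by (simp add: poly_pcompose_monom_mod_xn1)
qed

end

theorem theorem2p10:
  fixes emb :: "'a::{field,finite} \<Rightarrow> 'b::field"
    and \<theta> :: 'b and q n s s' t :: nat and P :: "nat set"
  assumes q_def: "q = card (UNIV :: 'a set)"
    and emb_inj: "inj emb"
    and emb_add: "\<And>x y. emb (x + y) = emb x + emb y"
    and emb_mult: "\<And>x y. emb (x * y) = emb x * emb y"
    and emb_one: "emb 1 = 1"
    and n_pos: "n > 0"
    and coprime_qn: "coprime q n"
    and theta_root: "\<theta> ^ n = 1"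
    and theta_prim: "\<And>k. 0 < k \<Longrightarrow> k < n \<Longrightarrow> \<theta> ^ k \<noteq> 1"
    and P_inv: "mu_invariant q n P"
    and s_unit: "s < n" "coprime s n"
    and s'_inv: "s' > 0" "[s * s' = 1] (mod n)"
    and t_range: "t < n"
    and t_cong: "[q * t = t] (mod n)"
  shows "phi emb \<theta> n s' t ` cyc_code emb \<theta> n P = cyc_code emb \<theta> n (rho n s t ` P)"
proof -
  \<comment> \<open>Not needed: \<open>emb_inj\<close> (field homomorphisms are injective), \<open>coprime_qn\<close>,
    \<open>s < n\<close>, \<open>s' > 0\<close> and \<open>t < n\<close>.\<close>
  have "emb 0 = 0"
    using emb_add[of 0 0] by (simp only: add_0 add_cancel_right_right)
  then interpret cyclic_code emb \<theta> n
    by unfold_locales (simp_all add: emb_add emb_mult emb_one n_pos theta_root theta_prim)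
  have "\<theta> ^ t \<in> range emb"
    using root_power_in_range t_cong q_def by simp
  then obtain c where c: "emb c = \<theta> ^ t"
    by (metis rangeE)
  show ?thesis
  proof (rule image_cyc_code[where \<Psi> = "\<lambda>b. pcompose b (monom (c ^ s) s) mod xn1 n"])
    show "mu_invariant CARD('a) n (rho n s t ` P)"
      using mu_invariant_rho_image P_inv t_cong q_def by blast
    show "degree (phi emb \<theta> n s' t a) < n" for a
      by (simp add: phi_def degree_mod_xn1_less n_pos)
  qed (use P_inv q_def bij_betw_rho[OF s_unit(2)] poly_phi_rho[OF c s'_inv(2)] poly_pcompose_rho[OF c]
        degree_mod_xn1_less n_pos in auto)
qed

end
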